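(* Let $G=(V,E)$ be a finite simple connected graph and let $\lambda\in(0,1)$. Then $$\sum_{u\in V} t^{e}_{\lambda}(u)\;=\;\sum_{\substack{(k,l)\in V\times V\\ k\neq l}} d(k,l)\,\lambda^{d(k,l)}\;=\;\sum_{u\in V} c^{e}_{\lambda}(u),$$ where the middle sum runs over ordered pairs of distinct vertices.
   Context: $d(u,v)$ denotes the distance between vertices $u,v$ in $G$, and $[u]$ denotes the set of neighbours of $u$. For a vertex $u$, $t^{e}_{\lambda}(u)=\sum_{v\in V\setminus\{u\}} d(u,v)\lambda^{d(u,v)}$. For vertices $k,l$, $s^{kl}$ is the number of shortest $k$–$l$ paths, and for an edge $uv$, $s^{kl}_{uv}$ is the number of shortest $k$–$l$ paths that pass through the edge $uv$. The exponential edge betweenness of an edge $uv$ is $b^{e}_{\lambda}(uv)=\sum_{\{k,l\}} \frac{s^{kl}_{uv}}{s^{kl}}\lambda^{d(k,l)}$, the sum running over all unordered pairs $\{k,l\}$ of distinct vertices of $V$. The exponential betweenness centrality of a vertex $u$ is $c^{e}_{\lambda}(u)=\sum_{v\in[u]} b^{e}_{\lambda}(uv)$. *)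

theory Defs
  imports Complex_Main
begin

text \<open>Walks are nonempty vertex lists with consecutive
  vertices adjacent; a walk with n+1 vertices has length n.\<close>

definition simple_graph :: "'a set \<Rightarrow> ('a \<Rightarrow> 'a \<Rightarrow> bool) \<Rightarrow> bool" where
  "simple_graph V E \<longleftrightarrow> finite V \<and> (\<forall>u v. E u v \<longrightarrow> u \<in> V \<and> v \<in> V)
     \<and> (\<forall>u v. E u v \<longrightarrow> E v u) \<and> (\<forall>u. \<not> E u u)"

definition walk :: "'a set \<Rightarrow> ('a \<Rightarrow> 'a \<Rightarrow> bool) \<Rightarrow> 'a list \<Rightarrow> bool" where
  "walk V E xs \<longleftrightarrow> xs \<noteq> [] \<and> set xs \<subseteq> V \<and>
     (\<forall>i. i + 1 < length xs \<longrightarrow> E (xs ! i) (xs ! (i + 1)))"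

definition walks_between :: "'a set \<Rightarrow> ('a \<Rightarrow> 'a \<Rightarrow> bool) \<Rightarrow> 'a \<Rightarrow> 'a \<Rightarrow> 'a list set" where
  "walks_between V E u v = {xs. walk V E xs \<and> hd xs = u \<and> last xs = v}"

definition connected_graph :: "'a set \<Rightarrow> ('a \<Rightarrow> 'a \<Rightarrow> bool) \<Rightarrow> bool" where
  "connected_graph V E \<longleftrightarrow> (\<forall>u\<in>V. \<forall>v\<in>V. walks_between V E u v \<noteq> {})"

definition dist_g :: "'a set \<Rightarrow> ('a \<Rightarrow> 'a \<Rightarrow> bool) \<Rightarrow> 'a \<Rightarrow> 'a \<Rightarrow> nat" where
  "dist_g V E u v = (LEAST n. \<exists>xs \<in> walks_between V E u v. length xs = n + 1)"

definition neighbours :: "'a set \<Rightarrow> ('a \<Rightarrow> 'a \<Rightarrow> bool) \<Rightarrow> 'a \<Rightarrow> 'a set" where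
  "neighbours V E u = {v \<in> V. E u v}"

definition shortest_paths :: "'a set \<Rightarrow> ('a \<Rightarrow> 'a \<Rightarrow> bool) \<Rightarrow> 'a \<Rightarrow> 'a \<Rightarrow> 'a list set" where
  "shortest_paths V E k l = {xs \<in> walks_between V E k l. length xs = dist_g V E k l + 1}"

definition uses_edge :: "'a list \<Rightarrow> 'a \<Rightarrow> 'a \<Rightarrow> bool" where
  "uses_edge xs u v \<longleftrightarrow> (\<exists>i. i + 1 < length xs \<and>
     ((xs ! i = u \<and> xs ! (i + 1) = v) \<or> (xs ! i = v \<and> xs ! (i + 1) = u)))"

definition num_sp :: "'a set \<Rightarrow> ('a \<Rightarrow> 'a \<Rightarrow> bool) \<Rightarrow> 'a \<Rightarrow> 'a \<Rightarrow> nat" where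
  "num_sp V E k l = card (shortest_paths V E k l)"

definition num_sp_edge :: "'a set \<Rightarrow> ('a \<Rightarrow> 'a \<Rightarrow> bool) \<Rightarrow> 'a \<Rightarrow> 'a \<Rightarrow> 'a \<Rightarrow> 'a \<Rightarrow> nat" where
  "num_sp_edge V E k l u v = card {xs \<in> shortest_paths V E k l. uses_edge xs u v}"

definition exp_trans :: "'a set \<Rightarrow> ('a \<Rightarrow> 'a \<Rightarrow> bool) \<Rightarrow> real \<Rightarrow> 'a \<Rightarrow> real" where
  "exp_trans V E lam u = (\<Sum>v\<in>V - {u}. real (dist_g V E u v) * lam ^ dist_g V E u v)"

definition upairs :: "'a set \<Rightarrow> 'a set set" where
  "upairs V = {{k, l} | k l. k \<in> V \<and> l \<in> V \<and> k \<noteq> l}"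

text \<open>The summand of the exponential edge betweenness for an ordered pair (k,l);
  it is symmetric in k,l, so evaluating it at any ordering of the unordered pair is well defined.\<close>
definition eb_term :: "'a set \<Rightarrow> ('a \<Rightarrow> 'a \<Rightarrow> bool) \<Rightarrow> real \<Rightarrow> 'a \<Rightarrow> 'a \<Rightarrow> 'a \<Rightarrow> 'a \<Rightarrow> real" where
  "eb_term V E lam u v k l =
     real (num_sp_edge V E k l u v) / real (num_sp V E k l) * lam ^ dist_g V E k l"

definition exp_edge_betw :: "'a set \<Rightarrow> ('a \<Rightarrow> 'a \<Rightarrow> bool) \<Rightarrow> real \<Rightarrow> 'a \<Rightarrow> 'a \<Rightarrow> real" where
  "exp_edge_betw V E lam u v =
     (\<Sum>P\<in>upairs V. (case (SOME kl. P = {fst kl, snd kl} \<and> fst kl \<noteq> snd kl) of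
        (k, l) \<Rightarrow> eb_term V E lam u v k l))"

definition exp_betw :: "'a set \<Rightarrow> ('a \<Rightarrow> 'a \<Rightarrow> bool) \<Rightarrow> real \<Rightarrow> 'a \<Rightarrow> real" where
  "exp_betw V E lam u = (\<Sum>v\<in>neighbours V E u. exp_edge_betw V E lam u v)"

end

theory Submission imports Defs begin

text \<open>A shortest k-l path has no repeated vertex, so it traverses d(k,l) distinct edges,
  and among the oriented edges (u,v) with v in [u] it uses exactly 2 d(k,l). Summing
  s^kl_uv / s^kl over all oriented edges therefore gives 2 d(k,l) for every pair {k,l}, so
  the sum of c^e_lambda(u) over u is twice the sum of d(k,l) lambda^d(k,l) over unordered pairs,
  i.e. the sum over ordered pairs. The identity for t^e_lambda is a regrouping of the same
  double sum. No condition on lambda is needed.\<close>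

lemma walk_iff_successively:
  "walk V E xs \<longleftrightarrow> xs \<noteq> [] \<and> set xs \<subseteq> V \<and> successively E xs"
  by (simp add: walk_def successively_conv_nth)

lemma walks_between_rev:
  assumes "simple_graph V E" "xs \<in> walks_between V E u v"
  shows "rev xs \<in> walks_between V E v u"
proof -
  have "successively E xs" "xs \<noteq> []" "set xs \<subseteq> V" "hd xs = u" "last xs = v"
    using assms(2) by (auto simp: walks_between_def walk_iff_successively)
  moreover have "successively (\<lambda>x y. E y x) xs"
    using successively_mono[OF \<open>successively E xs\<close>] assms(1) by (auto simp: simple_graph_def)
  ultimately show ?thesis
    by (auto simp: walks_between_def walk_iff_successively hd_rev last_rev)
qed

lemma dist_g_sym:
  assumes "simple_graph V E"
  shows "dist_g V E u v = dist_g V E v u"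
proof -
  have "(\<exists>xs \<in> walks_between V E u v. length xs = n + 1)
    \<longleftrightarrow> (\<exists>xs \<in> walks_between V E v u. length xs = n + 1)" for n
    using walks_between_rev[OF assms] by (metis length_rev)
  then show ?thesis unfolding dist_g_def by simp
qed

lemma dist_g_le_walk_length:
  assumes "xs \<in> walks_between V E u v"
  shows "dist_g V E u v \<le> length xs - 1"
proof -
  have "xs \<noteq> []" using assms by (auto simp: walks_between_def walk_def)
  then have "\<exists>ys \<in> walks_between V E u v. length ys = (length xs - 1) + 1"
    using assms by auto
  then show ?thesis unfolding dist_g_def by (rule Least_le)
qed

lemma shortest_paths_nonempty:
  assumes "connected_graph V E" "u \<in> V" "v \<in> V"
  shows "shortest_paths V E u v \<noteq> {}"
proof -
  obtain xs where xs: "xs \<in> walks_between V E u v"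
    using assms by (auto simp: connected_graph_def)
  then have "xs \<noteq> []" by (auto simp: walks_between_def walk_def)
  then have "\<exists>n. \<exists>ys \<in> walks_between V E u v. length ys = n + 1"
    using xs by (metis Suc_eq_plus1 Suc_pred length_greater_0_conv)
  from LeastI_ex[OF this] show ?thesis
    unfolding shortest_paths_def dist_g_def by auto
qed

lemma finite_shortest_paths:
  assumes "simple_graph V E"
  shows "finite (shortest_paths V E u v)"
proof (rule finite_subset)
  show "shortest_paths V E u v \<subseteq> {xs. set xs \<subseteq> V \<and> length xs = dist_g V E u v + 1}"
    by (auto simp: shortest_paths_def walks_between_def walk_def)
  show "finite {xs. set xs \<subseteq> V \<and> length xs = dist_g V E u v + 1}"
    using assms by (intro finite_lists_length_eq) (auto simp: simple_graph_def)
qed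

lemma distinct_shortest_path:
  assumes "xs \<in> shortest_paths V E k l"
  shows "distinct xs"
proof (rule ccontr)
  assume "\<not> distinct xs"
  then obtain as bs cs y where xs: "xs = as @ [y] @ bs @ [y] @ cs"
    using not_distinct_decomp by blast
  have walk: "xs \<in> walks_between V E k l" and len: "length xs = dist_g V E k l + 1"
    using assms by (auto simp: shortest_paths_def)
  let ?shortcut = "as @ [y] @ cs"
  have "?shortcut \<in> walks_between V E k l"
    using walk unfolding xs
    by (cases as) (auto simp: walks_between_def walk_iff_successively
        successively_append_iff successively_Cons hd_append)
  then have "dist_g V E k l \<le> length ?shortcut - 1"
    by (rule dist_g_le_walk_length)
  moreover have "length ?shortcut < length xs" using xs by simp
  ultimately show False using len by simp
qed

lemma card_uses_edge_distinct:
  assumes "distinct xs"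
  shows "card {(u, v). uses_edge xs u v} = 2 * (length xs - 1)"
proof -
  let ?n = "length xs - 1"
  let ?fwd = "(\<lambda>i. (xs ! i, xs ! (i + 1))) ` {..<?n}"
  let ?bwd = "(\<lambda>i. (xs ! (i + 1), xs ! i)) ` {..<?n}"
  have split: "{(u, v). uses_edge xs u v} = ?fwd \<union> ?bwd"
    unfolding uses_edge_def by (auto simp: image_iff; force simp: less_diff_conv)
  have "inj_on (\<lambda>i. (xs ! i, xs ! (i + 1))) {..<?n}"
    "inj_on (\<lambda>i. (xs ! (i + 1), xs ! i)) {..<?n}"
    using assms by (auto simp: inj_on_def nth_eq_iff_index_eq)
  then have cards: "card ?fwd = ?n" "card ?bwd = ?n"
    by (simp_all add: card_image)
  have "?fwd \<inter> ?bwd = {}"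
  proof (rule ccontr)
    assume "?fwd \<inter> ?bwd \<noteq> {}"
    then obtain i j where "i < ?n" "j < ?n" "xs ! i = xs ! (j + 1)" "xs ! (i + 1) = xs ! j"
      by auto
    then have "i = j + 1" "i + 1 = j" using assms by (auto simp: nth_eq_iff_index_eq)
    then show False by simp
  qed
  then show ?thesis
    using split cards by (simp add: card_Un_disjoint)
qed

lemma uses_edge_imp_edge:
  assumes "simple_graph V E" "walk V E xs" "uses_edge xs u v"
  shows "u \<in> V \<and> v \<in> V \<and> E u v"
proof -
  obtain i where i: "i + 1 < length xs"
    "(xs ! i = u \<and> xs ! (i + 1) = v) \<or> (xs ! i = v \<and> xs ! (i + 1) = u)"
    using assms(3) unfolding uses_edge_def by blast
  have "E (xs ! i) (xs ! (i + 1))" "xs ! i \<in> V" "xs ! (i + 1) \<in> V"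
    using assms(2) i(1) by (auto simp: walk_def)
  then show ?thesis using i(2) assms(1) by (auto simp: simple_graph_def)
qed

definition darts :: "'a set \<Rightarrow> ('a \<Rightarrow> 'a \<Rightarrow> bool) \<Rightarrow> ('a \<times> 'a) set" where
  "darts V E = Sigma V (neighbours V E)"

lemma finite_darts:
  assumes "simple_graph V E"
  shows "finite (darts V E)"
  using assms unfolding darts_def
  by (intro finite_SigmaI) (auto simp: simple_graph_def neighbours_def)

lemma sum_num_sp_edge_darts:
  assumes G: "simple_graph V E"
  shows "(\<Sum>(u, v)\<in>darts V E. num_sp_edge V E k l u v) = 2 * dist_g V E k l * num_sp V E k l"
proof -
  let ?S = "shortest_paths V E k l"
  have "(\<Sum>(u, v)\<in>darts V E. num_sp_edge V E k l u v)
      = (\<Sum>(u, v)\<in>darts V E. \<Sum>xs\<in>?S. of_bool (uses_edge xs u v))"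
    using finite_shortest_paths[OF G] by (simp add: num_sp_edge_def Int_def)
  also have "\<dots> = (\<Sum>xs\<in>?S. \<Sum>(u, v)\<in>darts V E. of_bool (uses_edge xs u v))"
    by (subst sum.swap) (simp add: case_prod_beta)
  also have "\<dots> = (\<Sum>xs\<in>?S. 2 * dist_g V E k l)"
  proof (rule sum.cong[OF refl])
    fix xs assume xs: "xs \<in> ?S"
    have walk: "walk V E xs" and len: "length xs = dist_g V E k l + 1"
      using xs by (auto simp: shortest_paths_def walks_between_def)
    have "darts V E \<inter> {(u, v). uses_edge xs u v} = {(u, v). uses_edge xs u v}"
      using uses_edge_imp_edge[OF G walk] by (auto simp: darts_def neighbours_def)
    then have "(\<Sum>(u, v)\<in>darts V E. of_bool (uses_edge xs u v)) = card {(u, v). uses_edge xs u v}"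
      using finite_darts[OF G] by (simp add: case_prod_beta')
    also have "\<dots> = 2 * dist_g V E k l"
      using card_uses_edge_distinct[OF distinct_shortest_path[OF xs]] len by simp
    finally show "(\<Sum>(u, v)\<in>darts V E. of_bool (uses_edge xs u v)) = 2 * dist_g V E k l" .
  qed
  also have "\<dots> = 2 * dist_g V E k l * num_sp V E k l"
    by (simp add: num_sp_def)
  finally show ?thesis .
qed

lemma sum_eb_term_darts:
  assumes G: "simple_graph V E" and C: "connected_graph V E" and "k \<in> V" "l \<in> V"
  shows "(\<Sum>(u, v)\<in>darts V E. eb_term V E lam u v k l)
       = 2 * (real (dist_g V E k l) * lam ^ dist_g V E k l)"
proof -
  have "num_sp V E k l > 0"
    using shortest_paths_nonempty[OF C assms(3,4)] finite_shortest_paths[OF G]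
    by (simp add: num_sp_def card_gt_0_iff)
  moreover have "(\<Sum>(u, v)\<in>darts V E. real (num_sp_edge V E k l u v))
      = real (2 * dist_g V E k l * num_sp V E k l)"
    using arg_cong[OF sum_num_sp_edge_darts[OF G, of k l], of real]
    by (simp add: of_nat_sum case_prod_unfold)
  ultimately show ?thesis
    unfolding eb_term_def
    by (simp add: sum_divide_distrib[symmetric] sum_distrib_right[symmetric] case_prod_beta')
qed

definition upair_rep :: "'a set \<Rightarrow> 'a \<times> 'a" where
  "upair_rep P = (SOME kl. P = {fst kl, snd kl} \<and> fst kl \<noteq> snd kl)"

lemma upair_repE:
  assumes "P \<in> upairs V"
  obtains k l where "upair_rep P = (k, l)" "P = {k, l}" "k \<noteq> l" "k \<in> V" "l \<in> V"
proof -
  obtain a b where ab: "a \<in> V" "b \<in> V" "a \<noteq> b" "P = {a, b}"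
    using assms unfolding upairs_def by blast
  then have "\<exists>kl. P = {fst kl, snd kl} \<and> fst kl \<noteq> snd kl"
    by (intro exI[of _ "(a, b)"]) auto
  then have "P = {fst (upair_rep P), snd (upair_rep P)} \<and> fst (upair_rep P) \<noteq> snd (upair_rep P)"
    unfolding upair_rep_def by (rule someI_ex)
  with ab show thesis
    by (intro that[of "fst (upair_rep P)" "snd (upair_rep P)"]) (auto simp: doubleton_eq_iff)
qed

lemma exp_edge_betw_upair_rep:
  "exp_edge_betw V E lam u v = (\<Sum>P\<in>upairs V. case upair_rep P of (k, l) \<Rightarrow> eb_term V E lam u v k l)"
  unfolding exp_edge_betw_def upair_rep_def ..

lemma sum_off_diagonal_symmetric:
  fixes f :: "'a \<Rightarrow> 'a \<Rightarrow> 'b :: comm_semiring_1"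
  assumes "finite V" and sym: "\<And>k l. f k l = f l k"
  shows "(\<Sum>(k, l)\<in>{(k, l) \<in> V \<times> V. k \<noteq> l}. f k l)
       = (\<Sum>P\<in>upairs V. case upair_rep P of (k, l) \<Rightarrow> 2 * f k l)"
proof -
  let ?S = "{(k, l) \<in> V \<times> V. k \<noteq> l}"
  have "finite ?S" using assms(1) by (auto intro: finite_subset[of _ "V \<times> V"])
  have img: "(\<lambda>(k, l). {k, l}) ` ?S = upairs V"
    unfolding upairs_def by (auto simp: image_iff)
  have "(\<Sum>(k, l)\<in>?S. f k l)
      = (\<Sum>P\<in>(\<lambda>(k, l). {k, l}) ` ?S. \<Sum>(k, l)\<in>{x \<in> ?S. (case x of (k, l) \<Rightarrow> {k, l}) = P}. f k l)"
    by (rule sum.image_gen[OF \<open>finite ?S\<close>])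
  also have "\<dots> = (\<Sum>P\<in>upairs V. case upair_rep P of (k, l) \<Rightarrow> 2 * f k l)"
    unfolding img
  proof (rule sum.cong[OF refl])
    fix P assume "P \<in> upairs V"
    then obtain k l where kl: "upair_rep P = (k, l)" "P = {k, l}" "k \<noteq> l" "k \<in> V" "l \<in> V"
      by (rule upair_repE)
    then have "{x \<in> ?S. (case x of (k, l) \<Rightarrow> {k, l}) = P} = {(k, l), (l, k)}"
      by (auto simp: doubleton_eq_iff)
    then show "(\<Sum>(k, l)\<in>{x \<in> ?S. (case x of (k, l) \<Rightarrow> {k, l}) = P}. f k l)
        = (case upair_rep P of (k, l) \<Rightarrow> 2 * f k l)"
      using kl sym[of l k] by (simp add: mult_2)
  qed
  finally show ?thesis .
qed

lemma sum_exp_trans_eq_sum_off_diagonal: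
  assumes "finite V"
  shows "(\<Sum>u\<in>V. exp_trans V E lam u)
       = (\<Sum>(k, l)\<in>{(k, l) \<in> V \<times> V. k \<noteq> l}. real (dist_g V E k l) * lam ^ dist_g V E k l)"
proof -
  have "{(k, l) \<in> V \<times> V. k \<noteq> l} = Sigma V (\<lambda>u. V - {u})" by auto
  then show ?thesis unfolding exp_trans_def using assms by (simp add: sum.Sigma)
qed

lemma sum_exp_betw_eq_sum_darts:
  assumes "simple_graph V E"
  shows "(\<Sum>u\<in>V. exp_betw V E lam u) = (\<Sum>(u, v)\<in>darts V E. exp_edge_betw V E lam u v)"
  unfolding exp_betw_def darts_def using assms
  by (subst sum.Sigma) (auto simp: simple_graph_def neighbours_def)

lemma sum_exp_betw_eq_upairs:
  assumes G: "simple_graph V E" and C: "connected_graph V E"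
  shows "(\<Sum>u\<in>V. exp_betw V E lam u)
       = (\<Sum>P\<in>upairs V. case upair_rep P of (k, l) \<Rightarrow> 2 * (real (dist_g V E k l) * lam ^ dist_g V E k l))"
proof -
  have "(\<Sum>u\<in>V. exp_betw V E lam u)
      = (\<Sum>(u, v)\<in>darts V E. \<Sum>P\<in>upairs V. case upair_rep P of (k, l) \<Rightarrow> eb_term V E lam u v k l)"
    by (simp add: sum_exp_betw_eq_sum_darts[OF G] exp_edge_betw_upair_rep)
  also have "\<dots> = (\<Sum>P\<in>upairs V. case upair_rep P of (k, l) \<Rightarrow> \<Sum>(u, v)\<in>darts V E. eb_term V E lam u v k l)"
    unfolding case_prod_unfold by (rule sum.swap)
  also have "\<dots> = (\<Sum>P\<in>upairs V. case upair_rep P of (k, l) \<Rightarrow> 2 * (real (dist_g V E k l) * lam ^ dist_g V E k l))"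
  proof (rule sum.cong[OF refl])
    fix P assume "P \<in> upairs V"
    then obtain k l where "upair_rep P = (k, l)" "k \<in> V" "l \<in> V" by (rule upair_repE)
    then show "(case upair_rep P of (k, l) \<Rightarrow> \<Sum>(u, v)\<in>darts V E. eb_term V E lam u v k l)
        = (case upair_rep P of (k, l) \<Rightarrow> 2 * (real (dist_g V E k l) * lam ^ dist_g V E k l))"
      using sum_eb_term_darts[OF G C] by simp
  qed
  finally show ?thesis .
qed

theorem theorem1:
  fixes V :: "'a set" and E :: "'a \<Rightarrow> 'a \<Rightarrow> bool" and lam :: real
  assumes "simple_graph V E" and "connected_graph V E"
    and "0 < lam" and "lam < 1"
  shows "(\<Sum>u\<in>V. exp_trans V E lam u)
           = (\<Sum>(k, l)\<in>{(k, l) \<in> V \<times> V. k \<noteq> l}. real (dist_g V E k l) * lam ^ dist_g V E k l)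
       \<and> (\<Sum>(k, l)\<in>{(k, l) \<in> V \<times> V. k \<noteq> l}. real (dist_g V E k l) * lam ^ dist_g V E k l)
           = (\<Sum>u\<in>V. exp_betw V E lam u)"
proof
  have "finite V" using assms(1) by (simp add: simple_graph_def)
  then show "(\<Sum>u\<in>V. exp_trans V E lam u)
      = (\<Sum>(k, l)\<in>{(k, l) \<in> V \<times> V. k \<noteq> l}. real (dist_g V E k l) * lam ^ dist_g V E k l)"
    by (rule sum_exp_trans_eq_sum_off_diagonal)
  have "(\<Sum>(k, l)\<in>{(k, l) \<in> V \<times> V. k \<noteq> l}. real (dist_g V E k l) * lam ^ dist_g V E k l)
      = (\<Sum>P\<in>upairs V. case upair_rep P of (k, l) \<Rightarrow> 2 * (real (dist_g V E k l) * lam ^ dist_g V E k l))"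
    using dist_g_sym[OF assms(1)] by (intro sum_off_diagonal_symmetric[OF \<open>finite V\<close>]) metis
  also have "\<dots> = (\<Sum>u\<in>V. exp_betw V E lam u)"
    using sum_exp_betw_eq_upairs[OF assms(1,2)] by simp
  finally show "(\<Sum>(k, l)\<in>{(k, l) \<in> V \<times> V. k \<noteq> l}. real (dist_g V E k l) * lam ^ dist_g V E k l)
      = (\<Sum>u\<in>V. exp_betw V E lam u)" .
qed

end
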